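(* Let $p(\mathbf{Q},E)$ be an arbitrage-free answer-dependent pricing function, and let $g:\mathbb{R}_{\ge0}^{\mathcal{I}}\to\mathbb{R}_{\ge0}$ be monotone and subadditive. For $\mathbf{Q}\in B(\mathcal{L})$ let $\vec p(\mathbf{Q})=\langle p(\mathbf{Q},\mathbf{Q}(D))\mid D\in\mathcal{I}\rangle$. Then $p(\mathbf{Q})=g(\vec p(\mathbf{Q}))$ is an arbitrage-free instance-independent pricing function.
   Context: $\mathcal{I}$ is a countable nonempty set of database instances; queries are deterministic functions on $\mathcal{I}$; a query bundle is a finite tuple of queries from a language $\mathcal{L}$, evaluated componentwise; $B(\mathcal{L})$ is the set of bundles, closed under concatenation $\mathbf{Q}_1,\mathbf{Q}_2$. $g$ monotone: $x\le y$ coordinatewise implies $g(x)\le g(y)$; subadditive: $g(x+y)\le g(x)+g(y)$. Answer-dependent arbitrage-freeness of $p(\mathbf{Q},E)$: (i) for all $D\in\mathcal{I}$, if every $D'\in\mathcal{I}$ with $\mathbf{Q}_2(D')=\mathbf{Q}_2(D)$ satisfies $\mathbf{Q}_1(D')=\mathbf{Q}_1(D)$, then $p(\mathbf{Q}_2,\mathbf{Q}_2(D))\ge p(\mathbf{Q}_1,\mathbf{Q}_1(D))$; (ii) for all $D$, $p(\mathbf{Q},\mathbf{Q}(D))\le p(\mathbf{Q}_1,\mathbf{Q}_1(D))+p(\mathbf{Q}_2,\mathbf{Q}_2(D))$ where $\mathbf{Q}=\mathbf{Q}_1,\mathbf{Q}_2$. Instance-independent arbitrage-freeness of $p(\mathbf{Q})$: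 (i) if for all $D',D''\in\mathcal{I}$, $\mathbf{Q}_2(D')=\mathbf{Q}_2(D'')$ implies $\mathbf{Q}_1(D')=\mathbf{Q}_1(D'')$, then $p(\mathbf{Q}_2)\ge p(\mathbf{Q}_1)$; (ii) $p(\mathbf{Q}_1,\mathbf{Q}_2)\le p(\mathbf{Q}_1)+p(\mathbf{Q}_2)$. *)

theory Defs
  imports Complex_Main "HOL-Library.Countable"
begin

text \<open>Instances are the elements of a countable type 'd (types are nonempty).\<close>

definition bundles :: "('d \<Rightarrow> 'a) set \<Rightarrow> ('d \<Rightarrow> 'a) list set" where
  "bundles L = {Qs. set Qs \<subseteq> L}"

definition evalb :: "('d \<Rightarrow> 'a) list \<Rightarrow> 'd \<Rightarrow> 'a list" where
  "evalb Qs D = map (\<lambda>q. q D) Qs"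

definition arbitrage_free_ad ::
  "('d \<Rightarrow> 'a) set \<Rightarrow> (('d \<Rightarrow> 'a) list \<Rightarrow> 'a list \<Rightarrow> real) \<Rightarrow> bool" where
  "arbitrage_free_ad L p \<longleftrightarrow>
     (\<forall>Q\<in>bundles L. \<forall>E. 0 \<le> p Q E) \<and>
     (\<forall>Q1\<in>bundles L. \<forall>Q2\<in>bundles L. \<forall>D.
        (\<forall>D'. evalb Q2 D' = evalb Q2 D \<longrightarrow> evalb Q1 D' = evalb Q1 D) \<longrightarrow>
        p Q2 (evalb Q2 D) \<ge> p Q1 (evalb Q1 D)) \<and>
     (\<forall>Q1\<in>bundles L. \<forall>Q2\<in>bundles L. \<forall>D.
        p (Q1 @ Q2) (evalb (Q1 @ Q2) D) \<le> p Q1 (evalb Q1 D) + p Q2 (evalb Q2 D))"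

definition arbitrage_free_ii ::
  "('d \<Rightarrow> 'a) set \<Rightarrow> (('d \<Rightarrow> 'a) list \<Rightarrow> real) \<Rightarrow> bool" where
  "arbitrage_free_ii L p \<longleftrightarrow>
     (\<forall>Q\<in>bundles L. 0 \<le> p Q) \<and>
     (\<forall>Q1\<in>bundles L. \<forall>Q2\<in>bundles L.
        (\<forall>D' D''. evalb Q2 D' = evalb Q2 D'' \<longrightarrow> evalb Q1 D' = evalb Q1 D'') \<longrightarrow>
        p Q2 \<ge> p Q1) \<and>
     (\<forall>Q1\<in>bundles L. \<forall>Q2\<in>bundles L. p (Q1 @ Q2) \<le> p Q1 + p Q2)"

definition nonneg_vec :: "('d \<Rightarrow> real) \<Rightarrow> bool" where
  "nonneg_vec x \<longleftrightarrow> (\<forall>D. 0 \<le> x D)"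

definition nonneg_map :: "(('d \<Rightarrow> real) \<Rightarrow> real) \<Rightarrow> bool" where
  "nonneg_map g \<longleftrightarrow> (\<forall>x. nonneg_vec x \<longrightarrow> 0 \<le> g x)"

definition monotone_vec :: "(('d \<Rightarrow> real) \<Rightarrow> real) \<Rightarrow> bool" where
  "monotone_vec g \<longleftrightarrow> (\<forall>x y. nonneg_vec x \<longrightarrow> nonneg_vec y \<longrightarrow>
      (\<forall>D. x D \<le> y D) \<longrightarrow> g x \<le> g y)"

definition subadditive_vec :: "(('d \<Rightarrow> real) \<Rightarrow> real) \<Rightarrow> bool" where
  "subadditive_vec g \<longleftrightarrow> (\<forall>x y. nonneg_vec x \<longrightarrow> nonneg_vec y \<longrightarrow>
      g (\<lambda>D. x D + y D) \<le> g x + g y)"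

definition pvec :: "(('d \<Rightarrow> 'a) list \<Rightarrow> 'a list \<Rightarrow> real) \<Rightarrow> ('d \<Rightarrow> 'a) list \<Rightarrow> 'd \<Rightarrow> real" where
  "pvec p Q = (\<lambda>D. p Q (evalb Q D))"

end

theory Submission
  imports Defs
begin

text \<open>Each axiom of instance-independent arbitrage-freeness for \<open>g \<circ> pvec p\<close> follows from the
  corresponding answer-dependent axiom read pointwise on the price vectors: determinacy gives a
  pointwise inequality of price vectors, which \<open>g\<close> preserves by monotonicity; for a concatenation,
  monotonicity of \<open>g\<close> bounds it by \<open>g\<close> of the sum of the two price vectors, and subadditivity
  splits that sum.\<close>

lemma bundles_append:
  assumes "Q1 \<in> bundles L" and "Q2 \<in> bundles L"
  shows "Q1 @ Q2 \<in> bundles L"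
  using assms unfolding bundles_def by auto

lemma nonneg_vec_pvec:
  assumes "arbitrage_free_ad L p" and "Q \<in> bundles L"
  shows "nonneg_vec (pvec p Q)"
  using assms unfolding arbitrage_free_ad_def nonneg_vec_def pvec_def by blast

lemma nonneg_vec_add:
  assumes "nonneg_vec x" and "nonneg_vec y"
  shows "nonneg_vec (\<lambda>D. x D + y D)"
  using assms unfolding nonneg_vec_def by (simp add: add_nonneg_nonneg)

lemma pvec_mono_determined:
  assumes "arbitrage_free_ad L p" and "Q1 \<in> bundles L" and "Q2 \<in> bundles L"
    and "\<forall>D' D''. evalb Q2 D' = evalb Q2 D'' \<longrightarrow> evalb Q1 D' = evalb Q1 D''"
  shows "pvec p Q1 D \<le> pvec p Q2 D"
  using assms unfolding arbitrage_free_ad_def pvec_def by blast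

lemma pvec_append_le:
  assumes "arbitrage_free_ad L p" and "Q1 \<in> bundles L" and "Q2 \<in> bundles L"
  shows "pvec p (Q1 @ Q2) D \<le> pvec p Q1 D + pvec p Q2 D"
  using assms unfolding arbitrage_free_ad_def pvec_def by blast

lemma monotone_vecD:
  assumes "monotone_vec g" and "nonneg_vec x" and "nonneg_vec y" and "\<And>D. x D \<le> y D"
  shows "g x \<le> g y"
  using assms unfolding monotone_vec_def by blast

lemma subadditive_vecD:
  assumes "subadditive_vec g" and "nonneg_vec x" and "nonneg_vec y"
  shows "g (\<lambda>D. x D + y D) \<le> g x + g y"
  using assms unfolding subadditive_vec_def by blast

lemma price_of_pvec_append_le:
  assumes "arbitrage_free_ad L p" and "monotone_vec g" and "subadditive_vec g"
    and "Q1 \<in> bundles L" and "Q2 \<in> bundles L"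
  shows "g (pvec p (Q1 @ Q2)) \<le> g (pvec p Q1) + g (pvec p Q2)"
proof -
  have nn1: "nonneg_vec (pvec p Q1)" and nn2: "nonneg_vec (pvec p Q2)"
    using nonneg_vec_pvec assms(1,4,5) by blast+
  have "g (pvec p (Q1 @ Q2)) \<le> g (\<lambda>D. pvec p Q1 D + pvec p Q2 D)"
    using assms(2) nonneg_vec_pvec[OF assms(1) bundles_append[OF assms(4,5)]]
      nonneg_vec_add[OF nn1 nn2] pvec_append_le[OF assms(1,4,5)]
    by (rule monotone_vecD)
  also have "\<dots> \<le> g (pvec p Q1) + g (pvec p Q2)"
    using assms(3) nn1 nn2 by (rule subadditive_vecD)
  finally show ?thesis .
qed

theorem lemma16:
  fixes L :: "('d::countable \<Rightarrow> 'a) set"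
    and p :: "('d \<Rightarrow> 'a) list \<Rightarrow> 'a list \<Rightarrow> real"
    and g :: "('d \<Rightarrow> real) \<Rightarrow> real"
  assumes "arbitrage_free_ad L p"
    and "nonneg_map g" and "monotone_vec g" and "subadditive_vec g"
  shows "arbitrage_free_ii L (\<lambda>Q. g (pvec p Q))"
  unfolding arbitrage_free_ii_def
proof (intro conjI ballI impI)
  fix Q assume "Q \<in> bundles L"
  then show "0 \<le> g (pvec p Q)"
    using assms(2) nonneg_vec_pvec[OF assms(1)] unfolding nonneg_map_def by blast
next
  fix Q1 Q2 assume "Q1 \<in> bundles L" "Q2 \<in> bundles L"
    and "\<forall>D' D''. evalb Q2 D' = evalb Q2 D'' \<longrightarrow> evalb Q1 D' = evalb Q1 D''"
  then show "g (pvec p Q1) \<le> g (pvec p Q2)"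
    using assms(1,3) nonneg_vec_pvec pvec_mono_determined monotone_vecD by metis
next
  fix Q1 Q2 assume "Q1 \<in> bundles L" "Q2 \<in> bundles L"
  with assms(1,3,4) show "g (pvec p (Q1 @ Q2)) \<le> g (pvec p Q1) + g (pvec p Q2)"
    by (rule price_of_pvec_append_le)
qed

end
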